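(* Let $\rho^w$ and $\rho^b$ be convex risk measures. Then an equal risk price exists if and only if the fair price interval is bounded (i.e. $p_0^w\in\mathbb{R}$ and $p_0^b\in\mathbb{R}$). Moreover, when it exists, the equal risk price equals \[p_0^*=\frac{\varrho^w(0)-\varrho^b(0)}{2},\] which is the center of the fair price interval $[p_0^b,p_0^w]$ if the latter is non-empty.
   Context: Let $(\Omega,\mathcal{F},(\mathcal{F}_t)_{0\le t\le T},\mathbb{P})$ be a filtered probability space, with a money market account with zero interest rate and a risky asset $S_t$, a locally bounded real-valued semimartingale adapted to the filtration; the set of equivalent local martingale measures for $S$ is non-empty. For $p_0\in\mathbb{R}$, the set of admissible self-financing strategies is $\mathcal{X}(p_0)=\{X: \exists\,\xi\ \text{adapted},\ \exists c\in\mathbb{R},\ X_t=p_0+\int_0^t\xi_s\,dS_s\ge c\ \forall t\in[0,T]\}$. The option pays $F(S_T,Y_T)$ at $T$, where $Y_t$ is an adapted auxiliary finite-dimensional process. A risk measure maps random liabilities (costs) in $\mathcal{L}_p(\Omega,\mathcal{F}_T,\mathbb{P})$ to $\mathbb{R}\cup\{\infty\}$. A convex risk measure $\rho$ satisfies: monotonicity ($X\le Z$ a.s. $\Rightarrow \rho(X)\le\rho(Z)$), translation invariance ($\rho(X+m)=\rho(X)+m$ for $m\in\mathbb{R}$), normalization $\rho(0)=0$, and convexity ($\rho(\lambda X+(1-\lambda)Z)\le\lambda\rho(X)+(1-\lambda)\rho(Z)$ for $\lambda\in[0,1]$). Given risk measures $\rho^w,\rho^b$, define the minimal risks $\varrho^w(p_0)=\inf_{X\in\mathcal{X}(p_0)}\rho^w(F(S_T,Y_T)-X_T)$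 and $\varrho^b(p_0)=\inf_{X\in\mathcal{X}(-p_0)}\rho^b(-F(S_T,Y_T)-X_T)$. The equal risk price is the unique $p_0^*\in\mathbb{R}$ such that $\varrho^w(p_0^* )=\varrho^b(p_0^* )\in\mathbb{R}$, when such a unique price exists. The fair price interval is $[p_0^b,p_0^w]$ with $p_0^b=\sup\{p_0:\varrho^b(p_0)\le 0\}$ and $p_0^w=\inf\{p_0:\varrho^w(p_0)\le 0\}$. *)

theory Defs
  imports "HOL-Probability.Probability"
begin

definition rv_space :: "'w measure \<Rightarrow> ('w \<Rightarrow> real) set \<Rightarrow> bool" where
  "rv_space M D \<longleftrightarrow> D \<subseteq> borel_measurable M \<and> (\<lambda>_. 1) \<in> D \<and>
     (\<forall>X\<in>D. \<forall>Z\<in>D. \<forall>a b. (\<lambda>\<omega>. a * X \<omega> + b * Z \<omega>) \<in> D)"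

definition convex_risk_measure ::
  "'w measure \<Rightarrow> ('w \<Rightarrow> real) set \<Rightarrow> (('w \<Rightarrow> real) \<Rightarrow> ereal) \<Rightarrow> bool" where
  "convex_risk_measure M D \<rho> \<longleftrightarrow>
     (\<forall>X\<in>D. \<rho> X \<noteq> -\<infinity>) \<and>
     (\<forall>X\<in>D. \<forall>Z\<in>D. (AE \<omega> in M. X \<omega> \<le> Z \<omega>) \<longrightarrow> \<rho> X \<le> \<rho> Z) \<and>
     (\<forall>X\<in>D. \<forall>m::real. \<rho> (\<lambda>\<omega>. X \<omega> + m) = \<rho> X + ereal m) \<and>
     \<rho> (\<lambda>_. 0) = 0 \<and>
     (\<forall>X\<in>D. \<forall>Z\<in>D. \<forall>t::real. 0 \<le> t \<and> t \<le> 1 \<longrightarrow>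
        \<rho> (\<lambda>\<omega>. t * X \<omega> + (1 - t) * Z \<omega>) \<le> ereal t * \<rho> X + ereal (1 - t) * \<rho> Z)"

text \<open>G is the set of terminal gains (\<integral>\<xi> dS at T) of admissible strategies, so the terminal values
  of X(p0) are exactly p0 + g, g \<in> G.  H is the payoff F(S_T,Y_T).\<close>
definition min_risk_w :: "(('w \<Rightarrow> real) \<Rightarrow> ereal) \<Rightarrow> ('w \<Rightarrow> real) \<Rightarrow> ('w \<Rightarrow> real) set \<Rightarrow> real \<Rightarrow> ereal" where
  "min_risk_w \<rho> H G p0 = (INF g\<in>G. \<rho> (\<lambda>\<omega>. H \<omega> - (p0 + g \<omega>)))"

definition min_risk_b :: "(('w \<Rightarrow> real) \<Rightarrow> ereal) \<Rightarrow> ('w \<Rightarrow> real) \<Rightarrow> ('w \<Rightarrow> real) set \<Rightarrow> real \<Rightarrow> ereal" where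
  "min_risk_b \<rho> H G p0 = (INF g\<in>G. \<rho> (\<lambda>\<omega>. - H \<omega> - (- p0 + g \<omega>)))"

definition equal_risk_cond where
  "equal_risk_cond \<rho>w \<rho>b H G p0 \<longleftrightarrow>
     min_risk_w \<rho>w H G p0 = min_risk_b \<rho>b H G p0 \<and> \<bar>min_risk_w \<rho>w H G p0\<bar> \<noteq> \<infinity>"

definition equal_risk_price_exists where
  "equal_risk_price_exists \<rho>w \<rho>b H G \<longleftrightarrow> (\<exists>!p0. equal_risk_cond \<rho>w \<rho>b H G p0)"

definition fair_price_w :: "(('w \<Rightarrow> real) \<Rightarrow> ereal) \<Rightarrow> ('w \<Rightarrow> real) \<Rightarrow> ('w \<Rightarrow> real) set \<Rightarrow> ereal" where
  "fair_price_w \<rho> H G = Inf {ereal p0 | p0. min_risk_w \<rho> H G p0 \<le> 0}"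

definition fair_price_b :: "(('w \<Rightarrow> real) \<Rightarrow> ereal) \<Rightarrow> ('w \<Rightarrow> real) \<Rightarrow> ('w \<Rightarrow> real) set \<Rightarrow> ereal" where
  "fair_price_b \<rho> H G = Sup {ereal p0 | p0. min_risk_b \<rho> H G p0 \<le> 0}"

end

theory Submission
  imports Defs
begin

text \<open>Translation invariance makes both minimal risks affine in the price, with slopes \<open>-1\<close> and \<open>+1\<close>:
  \<open>\<varrho>\<^sup>w(p) = \<varrho>\<^sup>w(0) - p\<close> and \<open>\<varrho>\<^sup>b(p) = \<varrho>\<^sup>b(0) + p\<close>. Hence \<open>p\<^sup>w = \<varrho>\<^sup>w(0)\<close> and \<open>p\<^sup>b = -\<varrho>\<^sup>b(0)\<close>, and the
  equation \<open>\<varrho>\<^sup>w(p) = \<varrho>\<^sup>b(p)\<close> with a finite common value has a solution, necessarily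
  \<open>(\<varrho>\<^sup>w(0) - \<varrho>\<^sup>b(0))/2\<close>, exactly when \<open>\<varrho>\<^sup>w(0)\<close> and \<open>\<varrho>\<^sup>b(0)\<close> are both finite.\<close>

lemma INF_ereal_add_real: "(INF x\<in>I. f x + ereal c) = (INF x\<in>I. f x) + (ereal c :: ereal)"
proof (rule antisym)
  show "(INF x\<in>I. f x) + ereal c \<le> (INF x\<in>I. f x + ereal c)"
    by (rule INF_greatest) (intro add_right_mono INF_lower)
  have "(INF x\<in>I. f x + ereal c) - ereal c \<le> (INF x\<in>I. f x)"
  proof (rule INF_greatest)
    fix x assume "x \<in> I"
    then have "(INF x\<in>I. f x + ereal c) - ereal c \<le> f x + ereal c - ereal c"
      by (intro ereal_minus_mono INF_lower) auto
    also have "\<dots> = f x" by (cases "f x") auto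
    finally show "(INF x\<in>I. f x + ereal c) - ereal c \<le> f x" .
  qed
  then show "(INF x\<in>I. f x + ereal c) \<le> (INF x\<in>I. f x) + ereal c"
    by (cases "INF x\<in>I. f x + ereal c"; cases "INF x\<in>I. f x") auto
qed

lemma Inf_ereal_ge: "Inf {ereal p | p. A \<le> ereal p} = A"
proof (cases A)
  case (real a)
  then have "{ereal p | p. A \<le> ereal p} = {ereal p | p. a \<le> p}" by auto
  moreover have "Inf {ereal p | p. a \<le> p} = ereal a"
    by (rule antisym) (auto intro: Inf_lower Inf_greatest)
  ultimately show ?thesis using real by simp
next
  case PInf
  then show ?thesis by (simp add: top_ereal_def)
next
  case MInf
  have "Inf {ereal p | p. A \<le> ereal p} \<le> ereal b" for b
    by (rule Inf_lower) (use MInf in auto)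
  then show ?thesis using MInf ereal_bot by blast
qed

lemma Sup_ereal_le: "Sup {ereal p | p. ereal p \<le> A} = A"
proof (cases A)
  case (real a)
  then have "{ereal p | p. ereal p \<le> A} = {ereal p | p. p \<le> a}" by auto
  moreover have "Sup {ereal p | p. p \<le> a} = ereal a"
    by (rule antisym) (auto intro: Sup_upper Sup_least)
  ultimately show ?thesis using real by simp
next
  case PInf
  have "ereal b \<le> Sup {ereal p | p. ereal p \<le> A}" for b
    by (rule Sup_upper) (use PInf in auto)
  then show ?thesis using PInf ereal_top by blast
next
  case MInf
  then show ?thesis by (simp add: bot_ereal_def)
qed

lemma rv_space_lincomb:
  "rv_space M D \<Longrightarrow> X \<in> D \<Longrightarrow> Z \<in> D \<Longrightarrow> (\<lambda>\<omega>. a * X \<omega> + b * Z \<omega>) \<in> D"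
  unfolding rv_space_def by blast

lemma convex_risk_measure_add_const:
  "convex_risk_measure M D \<rho> \<Longrightarrow> X \<in> D \<Longrightarrow> \<rho> (\<lambda>\<omega>. X \<omega> + m) = \<rho> X + ereal m"
  unfolding convex_risk_measure_def by blast

lemma INF_convex_risk_measure_add_const:
  assumes "convex_risk_measure M D \<rho>" and "\<And>g. g \<in> G \<Longrightarrow> X g \<in> D"
  shows "(INF g\<in>G. \<rho> (\<lambda>\<omega>. X g \<omega> + m)) = (INF g\<in>G. \<rho> (X g)) + ereal m"
  using convex_risk_measure_add_const[OF assms(1) assms(2)]
  by (simp add: INF_ereal_add_real[symmetric] cong: INF_cong)

lemma min_risk_w_shift:
  assumes "rv_space M D" "convex_risk_measure M D \<rho>" "H \<in> D" "G \<subseteq> D"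
  shows "min_risk_w \<rho> H G p = min_risk_w \<rho> H G 0 - ereal p"
proof -
  have "(\<lambda>\<omega>. 1 * H \<omega> + (-1) * g \<omega>) \<in> D" if "g \<in> G" for g
    using that assms(1,3,4) by (blast intro: rv_space_lincomb)
  then have "(INF g\<in>G. \<rho> (\<lambda>\<omega>. (H \<omega> - g \<omega>) + (- p))) = (INF g\<in>G. \<rho> (\<lambda>\<omega>. H \<omega> - g \<omega>)) + ereal (- p)"
    by (intro INF_convex_risk_measure_add_const[OF assms(2)]) simp
  then show ?thesis
    unfolding min_risk_w_def by (simp add: algebra_simps minus_ereal_def)
qed

lemma min_risk_b_shift:
  assumes "rv_space M D" "convex_risk_measure M D \<rho>" "H \<in> D" "G \<subseteq> D"
  shows "min_risk_b \<rho> H G p = min_risk_b \<rho> H G 0 + ereal p"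
proof -
  have "(\<lambda>\<omega>. (-1) * H \<omega> + (-1) * g \<omega>) \<in> D" if "g \<in> G" for g
    using that assms(1,3,4) by (blast intro: rv_space_lincomb)
  then have "(INF g\<in>G. \<rho> (\<lambda>\<omega>. (- H \<omega> - g \<omega>) + p)) = (INF g\<in>G. \<rho> (\<lambda>\<omega>. - H \<omega> - g \<omega>)) + ereal p"
    by (intro INF_convex_risk_measure_add_const[OF assms(2)]) simp
  then show ?thesis
    unfolding min_risk_b_def by (simp add: algebra_simps)
qed

lemma fair_price_w_eq_min_risk_w:
  assumes "rv_space M D" "convex_risk_measure M D \<rho>" "H \<in> D" "G \<subseteq> D"
  shows "fair_price_w \<rho> H G = min_risk_w \<rho> H G 0"
proof -
  \<comment> \<open>The shift rule is used only at a fixed \<open>p\<close>: as a rewrite rule it loops on \<open>p = 0\<close>.\<close>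
  have "min_risk_w \<rho> H G p \<le> 0 \<longleftrightarrow> min_risk_w \<rho> H G 0 \<le> ereal p" for p
    using min_risk_w_shift[OF assms, of p] by (simp add: ereal_minus_le)
  then have "{ereal p | p. min_risk_w \<rho> H G p \<le> 0} = {ereal p | p. min_risk_w \<rho> H G 0 \<le> ereal p}"
    by blast
  then show ?thesis
    unfolding fair_price_w_def by (simp only: Inf_ereal_ge)
qed

lemma fair_price_b_eq_uminus_min_risk_b:
  assumes "rv_space M D" "convex_risk_measure M D \<rho>" "H \<in> D" "G \<subseteq> D"
  shows "fair_price_b \<rho> H G = - min_risk_b \<rho> H G 0"
proof -
  have "min_risk_b \<rho> H G p \<le> 0 \<longleftrightarrow> ereal p \<le> - min_risk_b \<rho> H G 0" for p
    using min_risk_b_shift[OF assms, of p] by (cases "min_risk_b \<rho> H G 0") auto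
  then have "{ereal p | p. min_risk_b \<rho> H G p \<le> 0} = {ereal p | p. ereal p \<le> - min_risk_b \<rho> H G 0}"
    by blast
  then show ?thesis
    unfolding fair_price_b_def by (simp only: Sup_ereal_le)
qed

lemma ereal_diff_eq_add_iff:
  fixes A B :: ereal
  shows "(A - ereal p = B + ereal p \<and> \<bar>A - ereal p\<bar> \<noteq> \<infinity>) \<longleftrightarrow>
    \<bar>A\<bar> \<noteq> \<infinity> \<and> \<bar>B\<bar> \<noteq> \<infinity> \<and> ereal p = (A - B) / 2"
  by (cases A; cases B) (auto simp: field_simps)

lemma equal_risk_cond_iff:
  assumes "rv_space M D" "convex_risk_measure M D \<rho>w" "convex_risk_measure M D \<rho>b"
    and "H \<in> D" "G \<subseteq> D"
  shows "equal_risk_cond \<rho>w \<rho>b H G p \<longleftrightarrow>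
    \<bar>min_risk_w \<rho>w H G 0\<bar> \<noteq> \<infinity> \<and> \<bar>min_risk_b \<rho>b H G 0\<bar> \<noteq> \<infinity> \<and>
    ereal p = (min_risk_w \<rho>w H G 0 - min_risk_b \<rho>b H G 0) / 2"
  unfolding equal_risk_cond_def min_risk_w_shift[OF assms(1,2,4,5), of p] min_risk_b_shift[OF assms(1,3,4,5), of p]
  by (rule ereal_diff_eq_add_iff)

lemma Ex1_ereal_eq_iff: "(\<exists>!p. ereal p = x) \<longleftrightarrow> \<bar>x\<bar> \<noteq> \<infinity>"
  by (cases x) auto

lemma equal_risk_price_exists_iff:
  assumes "rv_space M D" "convex_risk_measure M D \<rho>w" "convex_risk_measure M D \<rho>b"
    and "H \<in> D" "G \<subseteq> D"
  shows "equal_risk_price_exists \<rho>w \<rho>b H G \<longleftrightarrow>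
    \<bar>min_risk_w \<rho>w H G 0\<bar> \<noteq> \<infinity> \<and> \<bar>min_risk_b \<rho>b H G 0\<bar> \<noteq> \<infinity>"
    (is "_ \<longleftrightarrow> \<bar>?A\<bar> \<noteq> \<infinity> \<and> \<bar>?B\<bar> \<noteq> \<infinity>")
proof -
  have "(\<exists>!p. \<bar>?A\<bar> \<noteq> \<infinity> \<and> \<bar>?B\<bar> \<noteq> \<infinity> \<and> ereal p = (?A - ?B) / 2) \<longleftrightarrow> \<bar>?A\<bar> \<noteq> \<infinity> \<and> \<bar>?B\<bar> \<noteq> \<infinity>"
  proof (cases "\<bar>?A\<bar> \<noteq> \<infinity> \<and> \<bar>?B\<bar> \<noteq> \<infinity>")
    case True
    then have "\<bar>(?A - ?B) / 2\<bar> \<noteq> \<infinity>"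
      by (cases ?A; cases ?B) auto
    with True show ?thesis by (simp add: Ex1_ereal_eq_iff)
  qed auto
  then show ?thesis
    unfolding equal_risk_price_exists_def equal_risk_cond_iff[OF assms] .
qed

theorem proposition1:
  fixes M :: "'w measure" and D :: "('w \<Rightarrow> real) set"
    and \<rho>w \<rho>b :: "('w \<Rightarrow> real) \<Rightarrow> ereal"
    and H :: "'w \<Rightarrow> real" and G :: "('w \<Rightarrow> real) set"
  assumes "prob_space M"
    and "rv_space M D"
    and "convex_risk_measure M D \<rho>w" and "convex_risk_measure M D \<rho>b"
    and "H \<in> D" and "G \<subseteq> D" and "(\<lambda>_. 0) \<in> G"
  shows "(equal_risk_price_exists \<rho>w \<rho>b H G \<longleftrightarrow>
           \<bar>fair_price_w \<rho>w H G\<bar> \<noteq> \<infinity> \<and> \<bar>fair_price_b \<rho>b H G\<bar> \<noteq> \<infinity>)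
       \<and> (\<forall>p. equal_risk_price_exists \<rho>w \<rho>b H G \<and> equal_risk_cond \<rho>w \<rho>b H G p \<longrightarrow>
            ereal p = (min_risk_w \<rho>w H G 0 - min_risk_b \<rho>b H G 0) / 2
            \<and> (fair_price_b \<rho>b H G \<le> fair_price_w \<rho>w H G \<longrightarrow>
                 ereal p = (fair_price_b \<rho>b H G + fair_price_w \<rho>w H G) / 2))"
proof -
  note setting = assms(2-6)
  define A where "A = min_risk_w \<rho>w H G 0"
  define B where "B = min_risk_b \<rho>b H G 0"
  have fair_w: "fair_price_w \<rho>w H G = A"
    unfolding A_def using fair_price_w_eq_min_risk_w[OF assms(2,3,5,6)] .
  have fair_b: "fair_price_b \<rho>b H G = - B"
    unfolding B_def using fair_price_b_eq_uminus_min_risk_b[OF assms(2,4,5,6)] .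
  have "(A - B) / 2 = (- B + A) / 2" if "\<bar>A\<bar> \<noteq> \<infinity>" "\<bar>B\<bar> \<noteq> \<infinity>"
    using that by (cases A; cases B) auto
  then show ?thesis
    unfolding fair_w fair_b equal_risk_price_exists_iff[OF setting] equal_risk_cond_iff[OF setting]
      A_def[symmetric] B_def[symmetric]
    by auto
qed

end
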